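(* Let $\mathcal{K}$ be a statistical $\mathcal{ALC}$ knowledge base and $C, D$ arbitrary $\mathcal{ALC}$ concepts. Suppose there exist $\mathcal{I}_0, \mathcal{I}_1 \in \mathrm{Mod}(\mathcal{K})$ with $[D]^{\mathcal{I}_0} > 0$, $[D]^{\mathcal{I}_1} > 0$ and $$r_0 = \frac{[C \sqcap D]^{\mathcal{I}_0}}{[D]^{\mathcal{I}_0}} < \frac{[C \sqcap D]^{\mathcal{I}_1}}{[D]^{\mathcal{I}_1}} = r_1 .$$ Then there exists $\mathcal{I}_{0.5} \in \mathrm{Mod}(\mathcal{K})$ with $[D]^{\mathcal{I}_{0.5}} > 0$ and $\frac{[C \sqcap D]^{\mathcal{I}_{0.5}}}{[D]^{\mathcal{I}_{0.5}}} = \frac{r_0 + r_1}{2}$.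
   Context: $\mathcal{ALC}$ concepts over disjoint sets $N_C$, $N_R$: $C ::= \top \mid A \mid \neg C \mid C \sqcap C \mid \exists r.C$, standard semantics. Interpretations $\mathcal{I} = (\Delta^{\mathcal{I}}, \cdot^{\mathcal{I}})$ have non-empty finite domain; $[X]^{\mathcal{I}} := |X^{\mathcal{I}}|$. A conditional is $(C \mid D)[\ell,u]$ with concepts $C,D$ and rationals $0 \le \ell \le u \le 1$; $\mathcal{I} \models (C \mid D)[\ell,u]$ iff $[D]^{\mathcal{I}} = 0$ or $[C \sqcap D]^{\mathcal{I}}/[D]^{\mathcal{I}} \in [\ell,u]$. A statistical $\mathcal{ALC}$ knowledge base $\mathcal{K}$ is a finite set of conditionals; $\mathrm{Mod}(\mathcal{K})$ is the set of finite interpretations satisfying all of them. *)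

theory Defs
  imports Complex_Main
begin

datatype ('c, 'r) concept =
    Top
  | CName 'c
  | Neg "('c, 'r) concept"
  | Conj "('c, 'r) concept" "('c, 'r) concept"
  | Ex 'r "('c, 'r) concept"

text \<open>Domain elements are natural numbers (every finite
interpretation is isomorphic to one of this form).\<close>
record ('c, 'r) interp =
  dom :: "nat set"
  cint :: "'c \<Rightarrow> nat set"
  rint :: "'r \<Rightarrow> (nat \<times> nat) set"

definition wf_interp :: "('c, 'r) interp \<Rightarrow> bool" where
  "wf_interp I \<longleftrightarrow> finite (dom I) \<and> dom I \<noteq> {} \<and>
     (\<forall>A. cint I A \<subseteq> dom I) \<and> (\<forall>r. rint I r \<subseteq> dom I \<times> dom I)"

fun ext :: "('c, 'r) interp \<Rightarrow> ('c, 'r) concept \<Rightarrow> nat set" where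
  "ext I Top = dom I"
| "ext I (CName A) = cint I A"
| "ext I (Neg C) = dom I - ext I C"
| "ext I (Conj C D) = ext I C \<inter> ext I D"
| "ext I (Ex r C) = {x \<in> dom I. \<exists>y. (x, y) \<in> rint I r \<and> y \<in> ext I C}"

definition cnt :: "('c, 'r) interp \<Rightarrow> ('c, 'r) concept \<Rightarrow> nat" where
  "cnt I C = card (ext I C)"

record ('c, 'r) conditional =
  ccons :: "('c, 'r) concept"
  cante :: "('c, 'r) concept"
  lo :: rat
  up :: rat

definition wf_conditional :: "('c, 'r) conditional \<Rightarrow> bool" where
  "wf_conditional k \<longleftrightarrow> 0 \<le> lo k \<and> lo k \<le> up k \<and> up k \<le> 1"

definition sat_cond :: "('c, 'r) interp \<Rightarrow> ('c, 'r) conditional \<Rightarrow> bool" where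
  "sat_cond I k \<longleftrightarrow> cnt I (cante k) = 0 \<or>
     (real (cnt I (Conj (ccons k) (cante k))) / real (cnt I (cante k)) \<in>
        {real_of_rat (lo k) .. real_of_rat (up k)})"

definition is_KB :: "('c, 'r) conditional set \<Rightarrow> bool" where
  "is_KB K \<longleftrightarrow> finite K \<and> (\<forall>k\<in>K. wf_conditional k)"

definition Mod :: "('c, 'r) conditional set \<Rightarrow> ('c, 'r) interp set" where
  "Mod K = {I. wf_interp I \<and> (\<forall>k\<in>K. sat_cond I k)}"

end

theory Submission
  imports Defs
begin

text \<open>A conditional only constrains the counts of its concepts linearly:
  \<open>l \<cdot> [D] \<le> [C \<sqcap> D] \<le> u \<cdot> [D]\<close>.  Counts are additive under disjoint union of
  interpretations, so the models of any knowledge base are closed under disjoint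
  union.  Taking \<open>[D]\<^sup>I\<^sup>1\<close> copies of \<open>I\<^sub>0\<close> and \<open>[D]\<^sup>I\<^sup>0\<close> copies of \<open>I\<^sub>1\<close> gives a model in which
  both contribute the same number of \<open>D\<close>-elements, so its ratio is the mean of
  \<open>r\<^sub>0\<close> and \<open>r\<^sub>1\<close>.\<close>

definition rename_interp :: "(nat \<Rightarrow> nat) \<Rightarrow> ('c, 'r) interp \<Rightarrow> ('c, 'r) interp" where
  "rename_interp f I =
     \<lparr>dom = f ` dom I, cint = (\<lambda>A. f ` cint I A), rint = (\<lambda>r. map_prod f f ` rint I r)\<rparr>"

definition join_interp :: "('c, 'r) interp \<Rightarrow> ('c, 'r) interp \<Rightarrow> ('c, 'r) interp" where
  "join_interp I J =
     \<lparr>dom = dom I \<union> dom J, cint = (\<lambda>A. cint I A \<union> cint J A), rint = (\<lambda>r. rint I r \<union> rint J r)\<rparr>"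

definition disjoint_union :: "('c, 'r) interp \<Rightarrow> ('c, 'r) interp \<Rightarrow> ('c, 'r) interp" where
  "disjoint_union I J = join_interp (rename_interp (\<lambda>x. 2 * x) I) (rename_interp (\<lambda>x. 2 * x + 1) J)"

lemma ext_subset_dom: "wf_interp I \<Longrightarrow> ext I C \<subseteq> dom I"
  by (induction C) (auto simp: wf_interp_def)

lemma finite_ext: "wf_interp I \<Longrightarrow> finite (ext I C)"
  using ext_subset_dom[of I C] by (auto simp: wf_interp_def intro: finite_subset)

lemma wf_rename_interp: "wf_interp I \<Longrightarrow> wf_interp (rename_interp f I)"
  unfolding wf_interp_def rename_interp_def by fastforce

lemma wf_join_interp: "wf_interp I \<Longrightarrow> wf_interp J \<Longrightarrow> wf_interp (join_interp I J)"
  unfolding wf_interp_def join_interp_def by fastforce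

lemma ext_rename_interp:
  assumes "inj f"
  shows "ext (rename_interp f I) C = f ` ext I C"
proof (induction C)
  case (Neg C)
  then show ?case by (simp add: rename_interp_def image_set_diff[OF assms])
next
  case (Conj C1 C2)
  then show ?case by (simp add: image_Int[OF assms])
next
  case (Ex r C)
  have pair_mem: "(f x, f y) \<in> map_prod f f ` R \<longleftrightarrow> (x, y) \<in> R" for x y R
    using inj_image_mem_iff[OF prod.inj_map[OF assms assms], of "(x, y)"] by simp
  show ?case
  proof (rule set_eqI)
    fix z
    show "z \<in> ext (rename_interp f I) (Ex r C) \<longleftrightarrow> z \<in> f ` ext I (Ex r C)"
      using Ex
      by (auto simp: rename_interp_def pair_mem inj_image_mem_iff[OF assms] dest: injD[OF assms])
  qed
qed (simp_all add: rename_interp_def)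

lemma ext_join_interp:
  assumes "wf_interp I" "wf_interp J" "dom I \<inter> dom J = {}"
  shows "ext (join_interp I J) C = ext I C \<union> ext J C"
proof -
  note sub_I = ext_subset_dom[OF assms(1)] and sub_J = ext_subset_dom[OF assms(2)]
  show ?thesis
  proof (induction C)
    case (Neg C)
    then show ?case
      using sub_I[of C] sub_J[of C] assms(3) by (auto simp: join_interp_def)
  next
    case (Conj C1 C2)
    then show ?case
      using sub_I[of C1] sub_J[of C1] sub_I[of C2] sub_J[of C2] assms(3) by auto
  next
    case (Ex r C)
    have "rint I r \<subseteq> dom I \<times> dom I" "rint J r \<subseteq> dom J \<times> dom J"
      using assms(1,2) by (auto simp: wf_interp_def)
    with Ex show ?case
      using sub_I[of C] sub_J[of C] assms(3) by (auto simp: join_interp_def)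
  qed (simp_all add: join_interp_def)
qed

lemma cnt_rename_interp: "inj f \<Longrightarrow> cnt (rename_interp f I) C = cnt I C"
  by (simp add: cnt_def ext_rename_interp card_image inj_on_subset)

lemma cnt_join_interp:
  assumes "wf_interp I" "wf_interp J" "dom I \<inter> dom J = {}"
  shows "cnt (join_interp I J) C = cnt I C + cnt J C"
  unfolding cnt_def ext_join_interp[OF assms]
  using ext_subset_dom[OF assms(1), of C] ext_subset_dom[OF assms(2), of C] assms(3)
  by (intro card_Un_disjoint finite_ext assms(1,2)) auto

lemma sat_cond_iff_linear:
  assumes "wf_interp I"
  shows "sat_cond I k \<longleftrightarrow>
    real_of_rat (lo k) * real (cnt I (cante k)) \<le> real (cnt I (Conj (ccons k) (cante k))) \<and>
    real (cnt I (Conj (ccons k) (cante k))) \<le> real_of_rat (up k) * real (cnt I (cante k))"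
proof -
  have "cnt I (Conj (ccons k) (cante k)) \<le> cnt I (cante k)"
    unfolding cnt_def using finite_ext[OF assms] by (auto intro: card_mono)
  then show ?thesis
    unfolding sat_cond_def
    by (cases "cnt I (cante k) = 0") (auto simp: pos_le_divide_eq pos_divide_le_eq)
qed

lemma rename_interp_in_Mod: "inj f \<Longrightarrow> I \<in> Mod K \<Longrightarrow> rename_interp f I \<in> Mod K"
  by (auto simp: Mod_def wf_rename_interp sat_cond_iff_linear cnt_rename_interp)

lemma join_interp_in_Mod:
  assumes "I \<in> Mod K" "J \<in> Mod K" "dom I \<inter> dom J = {}"
  shows "join_interp I J \<in> Mod K"
proof -
  have wf: "wf_interp I" "wf_interp J"
    using assms(1,2) by (auto simp: Mod_def)
  show ?thesis
    using assms wf_join_interp[OF wf]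
    unfolding Mod_def
    by (auto simp: sat_cond_iff_linear wf cnt_join_interp[OF wf assms(3)] distrib_left
        intro!: add_mono)
qed

lemma dom_disjoint_rename_even_odd:
  "dom (rename_interp (\<lambda>x. 2 * x) I) \<inter> dom (rename_interp (\<lambda>x. 2 * x + 1) J) = {}"
  by (auto simp: rename_interp_def) presburger

lemma inj_double: "inj (\<lambda>x::nat. 2 * x)" and inj_double_plus_one: "inj (\<lambda>x::nat. 2 * x + 1)"
  by (auto intro: injI)

lemma wf_disjoint_union: "wf_interp I \<Longrightarrow> wf_interp J \<Longrightarrow> wf_interp (disjoint_union I J)"
  unfolding disjoint_union_def by (intro wf_join_interp wf_rename_interp)

lemma disjoint_union_in_Mod:
  "I \<in> Mod K \<Longrightarrow> J \<in> Mod K \<Longrightarrow> disjoint_union I J \<in> Mod K"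
  unfolding disjoint_union_def
  by (intro join_interp_in_Mod rename_interp_in_Mod inj_double inj_double_plus_one
      dom_disjoint_rename_even_odd)

lemma cnt_disjoint_union:
  assumes "wf_interp I" "wf_interp J"
  shows "cnt (disjoint_union I J) C = cnt I C + cnt J C"
  unfolding disjoint_union_def
    cnt_join_interp[OF wf_rename_interp[OF assms(1)] wf_rename_interp[OF assms(2)]
      dom_disjoint_rename_even_odd]
    cnt_rename_interp[OF inj_double] cnt_rename_interp[OF inj_double_plus_one] ..

text \<open>\<open>copies n I\<close> consists of \<open>n + 1\<close> copies of \<open>I\<close>.\<close>
fun copies :: "nat \<Rightarrow> ('c, 'r) interp \<Rightarrow> ('c, 'r) interp" where
  "copies 0 I = I"
| "copies (Suc n) I = disjoint_union I (copies n I)"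

lemma wf_copies: "wf_interp I \<Longrightarrow> wf_interp (copies n I)"
  by (induction n) (simp_all add: wf_disjoint_union)

lemma copies_in_Mod: "I \<in> Mod K \<Longrightarrow> copies n I \<in> Mod K"
  by (induction n) (simp_all add: disjoint_union_in_Mod)

lemma cnt_copies: "wf_interp I \<Longrightarrow> cnt (copies n I) C = Suc n * cnt I C"
  by (induction n) (simp_all add: cnt_disjoint_union wf_copies)

lemma Mod_closed_under_positive_combination:
  assumes "I \<in> Mod K" "J \<in> Mod K" "m > 0" "n > 0"
  obtains L where "L \<in> Mod K" "\<And>C. cnt L C = m * cnt I C + n * cnt J C"
proof
  let ?L = "disjoint_union (copies (m - 1) I) (copies (n - 1) J)"
  have wf: "wf_interp I" "wf_interp J"
    using assms(1,2) by (simp_all add: Mod_def)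
  show "?L \<in> Mod K"
    by (intro disjoint_union_in_Mod copies_in_Mod assms(1,2))
  show "cnt ?L C = m * cnt I C + n * cnt J C" for C
    using assms(3,4) by (simp add: cnt_disjoint_union wf_copies cnt_copies wf)
qed

theorem mainTheorem3:
  fixes K :: "('c, 'r) conditional set" and C D :: "('c, 'r) concept"
    and I0 I1 :: "('c, 'r) interp"
  assumes "is_KB K"
    and "I0 \<in> Mod K" and "I1 \<in> Mod K"
    and "cnt I0 D > 0" and "cnt I1 D > 0"
    and "real (cnt I0 (Conj C D)) / real (cnt I0 D) < real (cnt I1 (Conj C D)) / real (cnt I1 D)"
  shows "\<exists>I. I \<in> Mod K \<and> cnt I D > 0 \<and>
           real (cnt I (Conj C D)) / real (cnt I D) =
             (real (cnt I0 (Conj C D)) / real (cnt I0 D) + real (cnt I1 (Conj C D)) / real (cnt I1 D)) / 2"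
proof -
  obtain L where L: "L \<in> Mod K" "\<And>X. cnt L X = cnt I1 D * cnt I0 X + cnt I0 D * cnt I1 X"
    using Mod_closed_under_positive_combination[OF assms(2,3,5,4)] by blast
  have "real (cnt L (Conj C D)) / real (cnt L D) =
        (real (cnt I0 (Conj C D)) / real (cnt I0 D) + real (cnt I1 (Conj C D)) / real (cnt I1 D)) / 2"
    using assms(4,5) by (simp add: L(2) field_simps)
  moreover have "cnt L D > 0"
    using assms(4,5) by (simp add: L(2))
  ultimately show ?thesis
    using L(1) by blast
qed

end
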